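(* Let $G=(V,E,s)$ be a flow graph with dominator tree $D$, let $(x,y)\in E$ with $x$ reachable from $s$, and let $G'$ be obtained from $G$ by deleting $(x,y)$, where $y$ becomes unreachable from $s$ in $G'$. If a vertex $v$ that is reachable in both $G$ and $G'$ is affected by the deletion, i.e., $d'(v)\neq d(v)$, then there is a path $P$ in $G$ from $y$ to $v$ such that $\mathit{depth}(d(v))<\mathit{depth}(w)$ for all vertices $w$ on $P$.
   Context: A flow graph $G=(V,E,s)$ is a directed graph with start vertex $s$; a vertex is reachable if there is a path from $s$ to it. For reachable vertices, $w$ dominates $v$ if every path from $s$ to $v$ contains $w$. The immediate dominator $d(v)$ of a reachable $v\neq s$ is the proper dominator of $v$ that is dominated by all other proper dominators of $v$. The dominator tree $D$ is the tree on the reachable vertices rooted at $s$ in which the parent of $v\neq s$ is $d(v)$; $\mathit{depth}(w)$ is the depth of $w$ in $D$ (the dominator tree of $G$, before the deletion). $d'(v)$ denotes the immediate dominator of $v$ in $G'$. *)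

theory Defs
  imports Main
begin

definition flow_graph :: "'a set \<Rightarrow> ('a \<times> 'a) set \<Rightarrow> 'a \<Rightarrow> bool" where
  "flow_graph V E s \<longleftrightarrow> finite V \<and> E \<subseteq> V \<times> V \<and> s \<in> V"

definition is_path :: "('a \<times> 'a) set \<Rightarrow> 'a list \<Rightarrow> bool" where
  "is_path E p \<longleftrightarrow> p \<noteq> [] \<and> successively (\<lambda>a b. (a, b) \<in> E) p"

definition path_from_to :: "('a \<times> 'a) set \<Rightarrow> 'a list \<Rightarrow> 'a \<Rightarrow> 'a \<Rightarrow> bool" where
  "path_from_to E p u v \<longleftrightarrow> is_path E p \<and> hd p = u \<and> last p = v"

definition reachable :: "('a \<times> 'a) set \<Rightarrow> 'a \<Rightarrow> 'a \<Rightarrow> bool" where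
  "reachable E s v \<longleftrightarrow> (\<exists>p. path_from_to E p s v)"

definition dominates :: "('a \<times> 'a) set \<Rightarrow> 'a \<Rightarrow> 'a \<Rightarrow> 'a \<Rightarrow> bool" where
  "dominates E s w v \<longleftrightarrow> reachable E s w \<and> reachable E s v \<and>
     (\<forall>p. path_from_to E p s v \<longrightarrow> w \<in> set p)"

definition idom :: "('a \<times> 'a) set \<Rightarrow> 'a \<Rightarrow> 'a \<Rightarrow> 'a" where
  "idom E s v = (THE w. w \<noteq> v \<and> dominates E s w v \<and>
      (\<forall>u. u \<noteq> v \<and> dominates E s u v \<longrightarrow> dominates E s u w))"

text \<open>Depth in the dominator tree D (parent of v is idom v, root s):
  the number of parent steps needed to reach the root.\<close>
definition dom_depth :: "('a \<times> 'a) set \<Rightarrow> 'a \<Rightarrow> 'a \<Rightarrow> nat" where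
  "dom_depth E s w = (LEAST n. (idom E s ^^ n) w = s)"

end

theory Submission
  imports Defs
begin

text \<open>Let \<open>d = d(v)\<close> and \<open>u = d'(v)\<close>. Since \<open>d\<close> still dominates \<open>v\<close> after the deletion, it
  dominates \<open>u\<close> in \<open>G'\<close>, and \<open>u\<close> cannot dominate \<open>v\<close> in \<open>G\<close> (it would then dominate \<open>d\<close>,
  forcing \<open>u = d\<close>). So some path of \<open>G\<close> from \<open>s\<close> to \<open>v\<close> avoids \<open>u\<close>. Its part after the
  last occurrence of \<open>d\<close> consists of vertices properly dominated by \<open>d\<close>, hence deeper than \<open>d\<close>
  in \<open>D\<close>; and it must use the deleted edge, for otherwise prefixing it with a \<open>u\<close>-avoiding
  path of \<open>G'\<close> from \<open>s\<close> to \<open>d\<close> would reach \<open>v\<close> in \<open>G'\<close> without passing \<open>u\<close>. The part of it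
  from \<open>y\<close> on is the required path. Depth is computed as the number of proper dominators.\<close>

lemma path_from_to_prefix:
  assumes "path_from_to E (p @ q) u v" and "p \<noteq> []"
  shows "path_from_to E p u (last p)"
  using assms by (auto simp: path_from_to_def is_path_def successively_append_iff)

lemma path_from_to_suffix:
  assumes "path_from_to E (p @ q) u v" and "q \<noteq> []"
  shows "path_from_to E q (hd q) v"
  using assms by (auto simp: path_from_to_def is_path_def successively_append_iff)

lemma path_from_to_split:
  assumes "path_from_to E (p @ a # q) u v"
  shows "path_from_to E (p @ [a]) u a" and "path_from_to E (a # q) a v"
  using assms path_from_to_prefix[of E "p @ [a]" q] path_from_to_suffix[of E p "a # q"] by auto

lemma path_from_to_append:
  assumes "path_from_to E p u a" and "path_from_to E (a # q) a v"
  shows "path_from_to E (p @ q) u v"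
  using assms by (cases q) (auto simp: path_from_to_def is_path_def successively_append_iff)

lemma path_from_to_mono:
  assumes "E' \<subseteq> E" and "path_from_to E' p u v"
  shows "path_from_to E p u v"
  using assms unfolding path_from_to_def is_path_def by (auto elim: successively_mono)

lemma reachable_mono: "E' \<subseteq> E \<Longrightarrow> reachable E' s v \<Longrightarrow> reachable E s v"
  unfolding reachable_def using path_from_to_mono by metis

lemma reachable_refl: "reachable E s s"
  unfolding reachable_def path_from_to_def is_path_def by (rule exI[of _ "[s]"]) simp

lemma reachable_if_in_path:
  assumes "path_from_to E p s v" and "a \<in> set p"
  shows "reachable E s a"
proof -
  obtain p1 p2 where "p = p1 @ a # p2" using assms(2) by (meson split_list)
  with assms(1) have "path_from_to E (p1 @ [a]) s a" using path_from_to_split(1) by simp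
  then show ?thesis unfolding reachable_def by blast
qed

lemma successively_split_not_successively:
  assumes "successively P xs" and "\<not> successively Q xs"
  shows "\<exists>as a b bs. xs = as @ a # b # bs \<and> P a b \<and> \<not> Q a b"
  using assms
proof (induction xs rule: induct_list012)
  case (3 a b xs)
  show ?case
  proof (cases "Q a b")
    case True
    with "3.prems" obtain as c d bs where "b # xs = as @ c # d # bs" "P c d" "\<not> Q c d"
      using "3.IH"(2) by auto
    then show ?thesis by (intro exI[of _ "a # as"]) auto
  next
    case False
    with "3.prems" show ?thesis by (intro exI[of _ "[]"]) auto
  qed
qed simp_all

lemma not_dominates_avoiding_path:
  assumes "\<not> dominates E s a v" and "reachable E s a" and "reachable E s v"
  obtains p where "path_from_to E p s v" and "a \<notin> set p"
  using assms unfolding dominates_def by blast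

lemma dominates_refl: "reachable E s v \<Longrightarrow> dominates E s v v"
  unfolding dominates_def path_from_to_def is_path_def by auto

lemma dominates_start: "reachable E s v \<Longrightarrow> dominates E s s v"
  using reachable_refl[of E s] unfolding dominates_def path_from_to_def is_path_def
  by (auto intro: list.set_sel)

lemma dominates_trans:
  assumes "dominates E s a b" and "dominates E s b c"
  shows "dominates E s a c"
proof -
  have "a \<in> set p" if p: "path_from_to E p s c" for p
  proof -
    have "b \<in> set p" using assms(2) p unfolding dominates_def by blast
    then obtain p1 p2 where p12: "p = p1 @ b # p2" by (meson split_list)
    with p have "path_from_to E (p1 @ [b]) s b" using path_from_to_split(1) by simp
    then have "a \<in> set (p1 @ [b])" using assms(1) unfolding dominates_def by blast
    with p12 show ?thesis by auto
  qed
  with assms show ?thesis unfolding dominates_def by blast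
qed

lemma dominates_antisym:
  assumes ab: "dominates E s a b" and ba: "dominates E s b a"
  shows "a = b"
proof (rule ccontr)
  assume "a \<noteq> b"
  obtain p where p: "path_from_to E p s b"
    using ab unfolding dominates_def reachable_def by blast
  then have "a \<in> set p" using ab unfolding dominates_def by blast
  then obtain p1 p2 where p12: "p = p1 @ a # p2" "a \<notin> set p1" by (meson split_list_first)
  have pa: "path_from_to E (p1 @ [a]) s a" using p p12 path_from_to_split(1) by simp
  then have "b \<in> set (p1 @ [a])" using ba unfolding dominates_def by blast
  with \<open>a \<noteq> b\<close> obtain q1 q2 where q12: "p1 = q1 @ b # q2" by (auto dest: split_list)
  have "path_from_to E (q1 @ b # (q2 @ [a])) s a" using pa q12 by simp
  then have "path_from_to E (q1 @ [b]) s b" by (rule path_from_to_split(1))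
  then have "a \<in> set (q1 @ [b])" using ab unfolding dominates_def by blast
  with p12 q12 \<open>a \<noteq> b\<close> show False by auto
qed

lemma dominates_linear:
  assumes aw: "dominates E s a w" and bw: "dominates E s b w"
  shows "dominates E s a b \<or> dominates E s b a"
proof (rule ccontr)
  assume "\<not> (dominates E s a b \<or> dominates E s b a)"
  moreover have "reachable E s a" "reachable E s b" using aw bw by (auto simp: dominates_def)
  ultimately obtain q r where q: "path_from_to E q s b" "a \<notin> set q"
    and r: "path_from_to E r s a" "b \<notin> set r"
    using not_dominates_avoiding_path by metis
  obtain p where p: "path_from_to E p s w" using aw unfolding dominates_def reachable_def by blast
  then have "b \<in> set p" using bw unfolding dominates_def by blast
  then obtain p1 p2 where p12: "p = p1 @ b # p2" "b \<notin> set p2" by (meson split_list_last)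
  show False
  proof (cases "a \<in> set p2")
    case False
    have "path_from_to E (b # p2) b w" using p p12 path_from_to_split(2) by simp
    then have "path_from_to E (q @ p2) s w" by (rule path_from_to_append[OF q(1)])
    with False q(2) aw show False unfolding dominates_def by auto
  next
    case True
    then obtain p3 p4 where p34: "p2 = p3 @ a # p4" by (meson split_list)
    have "path_from_to E (a # p4) a w" using p p12 p34 path_from_to_split(2)[of E "p1 @ b # p3"] by simp
    then have "path_from_to E (r @ p4) s w" by (rule path_from_to_append[OF r(1)])
    with r(2) p12 p34 bw show False unfolding dominates_def by auto
  qed
qed

lemma dominates_subgraph:
  assumes "E' \<subseteq> E" and "dominates E s a v" and "reachable E' s v"
  shows "dominates E' s a v"
proof -
  have on_paths: "a \<in> set p" if "path_from_to E' p s v" for p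
    using path_from_to_mono[OF assms(1) that] assms(2) unfolding dominates_def by blast
  obtain p where "path_from_to E' p s v" using assms(3) reachable_def by metis
  then have "reachable E' s a" using on_paths reachable_if_in_path by metis
  with assms(3) on_paths show ?thesis unfolding dominates_def by blast
qed

lemma dominates_after_last_occurrence:
  assumes dv: "dominates E s d v" and P: "path_from_to E (p @ d # q) s v"
    and "d \<notin> set q" and "w \<in> set q"
  shows "dominates E s d w"
proof (rule ccontr)
  assume "\<not> dominates E s d w"
  moreover have "reachable E s w" using reachable_if_in_path[OF P] \<open>w \<in> set q\<close> by simp
  moreover have "reachable E s d" using dv by (simp add: dominates_def)
  ultimately obtain r where r: "path_from_to E r s w" "d \<notin> set r"
    using not_dominates_avoiding_path by metis
  obtain q1 q2 where q12: "q = q1 @ w # q2" using \<open>w \<in> set q\<close> by (meson split_list)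
  have "path_from_to E (w # q2) w v" using P q12 path_from_to_split(2)[of E "p @ d # q1"] by simp
  then have "path_from_to E (r @ q2) s v" by (rule path_from_to_append[OF r(1)])
  with r(2) \<open>d \<notin> set q\<close> q12 dv show False unfolding dominates_def by auto
qed

definition dominators :: "('a \<times> 'a) set \<Rightarrow> 'a \<Rightarrow> 'a \<Rightarrow> 'a set" where
  "dominators E s v = {u. dominates E s u v}"

lemma dominators_subset_path: "path_from_to E p s v \<Longrightarrow> dominators E s v \<subseteq> set p"
  unfolding dominators_def dominates_def by blast

lemma finite_dominators:
  assumes "reachable E s v"
  shows "finite (dominators E s v)"
proof -
  obtain p where "path_from_to E p s v" using assms unfolding reachable_def by blast
  from dominators_subset_path[OF this] show ?thesis by (rule finite_subset) simp
qed

lemma in_dominators_self: "reachable E s v \<Longrightarrow> v \<in> dominators E s v"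
  using dominates_refl by (simp add: dominators_def)

lemma dominators_start: "dominators E s s = {s}"
proof -
  have "path_from_to E [s] s s" by (simp add: path_from_to_def is_path_def)
  then have "dominators E s s \<subseteq> set [s]" by (rule dominators_subset_path)
  moreover have "s \<in> dominators E s s" by (rule in_dominators_self[OF reachable_refl])
  ultimately show ?thesis by auto
qed

lemma card_dominators_pos:
  assumes "reachable E s v"
  shows "0 < card (dominators E s v)"
  using finite_dominators[OF assms] in_dominators_self[OF assms] by (auto simp: card_gt_0_iff)

lemma card_dominators_strict_mono:
  assumes uv: "dominates E s u v" and "u \<noteq> v"
  shows "card (dominators E s u) < card (dominators E s v)"
proof (rule psubset_card_mono)
  have rv: "reachable E s v" using uv by (simp add: dominates_def)
  then show "finite (dominators E s v)" by (rule finite_dominators)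
  have "v \<notin> dominators E s u" using dominates_antisym[OF uv] \<open>u \<noteq> v\<close> by (auto simp: dominators_def)
  moreover have "v \<in> dominators E s v" using rv by (rule in_dominators_self)
  moreover have "dominators E s u \<subseteq> dominators E s v"
    using dominates_trans[OF _ uv] unfolding dominators_def by blast
  ultimately show "dominators E s u \<subset> dominators E s v" by blast
qed

text \<open>The proper dominator with the most dominators is dominated by all the others.\<close>
lemma idom_spec:
  assumes "reachable E s v" and "v \<noteq> s"
  shows "idom E s v \<noteq> v" and "dominates E s (idom E s v) v"
    and "\<And>u. u \<noteq> v \<Longrightarrow> dominates E s u v \<Longrightarrow> dominates E s u (idom E s v)"
proof -
  define S where "S = dominators E s v - {v}"
  have "finite S" unfolding S_def using finite_dominators[OF assms(1)] by simp
  have "s \<in> S" unfolding S_def dominators_def using dominates_start[OF assms(1)] assms(2) by simp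
  define c where "c u = card (dominators E s u)" for u
  have "Max (c ` S) \<in> c ` S" using \<open>finite S\<close> \<open>s \<in> S\<close> by (intro Max_in) auto
  then obtain m where m: "m \<in> S" "c m = Max (c ` S)" by auto
  have max: "c u \<le> c m" if "u \<in> S" for u
    unfolding m(2) using \<open>finite S\<close> that by (intro Max_ge) auto
  have mv: "m \<noteq> v" "dominates E s m v" using m(1) by (simp_all add: S_def dominators_def)
  have below: "dominates E s u m" if "u \<noteq> v" "dominates E s u v" for u
  proof (rule ccontr)
    assume "\<not> dominates E s u m"
    with dominates_linear[OF that(2) mv(2)] have "dominates E s m u" "m \<noteq> u" by auto
    then have "c m < c u" unfolding c_def by (rule card_dominators_strict_mono)
    moreover have "u \<in> S" using that by (simp add: S_def dominators_def)
    ultimately show False using max by fastforce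
  qed
  have "idom E s v = m"
    unfolding idom_def
  proof (rule the_equality)
    show "m \<noteq> v \<and> dominates E s m v \<and> (\<forall>u. u \<noteq> v \<and> dominates E s u v \<longrightarrow> dominates E s u m)"
      using mv below by blast
  next
    fix z assume z: "z \<noteq> v \<and> dominates E s z v \<and> (\<forall>u. u \<noteq> v \<and> dominates E s u v \<longrightarrow> dominates E s u z)"
    then have "dominates E s z m" using below by blast
    moreover have "dominates E s m z" using z mv by blast
    ultimately show "z = m" by (rule dominates_antisym)
  qed
  with mv below show "idom E s v \<noteq> v" "dominates E s (idom E s v) v"
    and "\<And>u. u \<noteq> v \<Longrightarrow> dominates E s u v \<Longrightarrow> dominates E s u (idom E s v)"
    by simp_all
qed

lemma dominators_idom:
  assumes "reachable E s v" and "v \<noteq> s"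
  shows "dominators E s (idom E s v) = dominators E s v - {v}"
proof
  show "dominators E s (idom E s v) \<subseteq> dominators E s v - {v}"
  proof
    fix u assume "u \<in> dominators E s (idom E s v)"
    then have u: "dominates E s u (idom E s v)" by (simp add: dominators_def)
    have "dominates E s u v" using dominates_trans[OF u idom_spec(2)[OF assms]] .
    moreover have "u \<noteq> v" using dominates_antisym[OF idom_spec(2)[OF assms]] u idom_spec(1)[OF assms] by blast
    ultimately show "u \<in> dominators E s v - {v}" by (simp add: dominators_def)
  qed
  show "dominators E s v - {v} \<subseteq> dominators E s (idom E s v)"
    using idom_spec(3)[OF assms] by (auto simp: dominators_def)
qed

lemma dom_depth_eq_card_dominators:
  assumes "reachable E s v"
  shows "dom_depth E s v = card (dominators E s v) - 1"
proof -
  \<comment> \<open>The chain of immediate dominators must be shown to reach \<open>s\<close>, or \<open>LEAST\<close> is meaningless.\<close>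
  have "(idom E s ^^ n) v = s \<and> dom_depth E s v = n"
    if "reachable E s v" "card (dominators E s v) = Suc n" for n v
    using that
  proof (induction n arbitrary: v)
    case 0
    moreover have "s \<in> dominators E s v" using dominates_start[OF "0.prems"(1)] by (simp add: dominators_def)
    ultimately have "v = s" using in_dominators_self[OF "0.prems"(1)] by (auto simp: card_Suc_eq)
    then show ?case by (simp add: dom_depth_def)
  next
    case (Suc n)
    then have "v \<noteq> s" using dominators_start[of E s] by auto
    have "reachable E s (idom E s v)" using idom_spec(2)[OF Suc.prems(1) \<open>v \<noteq> s\<close>] by (simp add: dominates_def)
    moreover have "card (dominators E s (idom E s v)) = Suc n"
      using dominators_idom[OF Suc.prems(1) \<open>v \<noteq> s\<close>] Suc.prems(2)
        finite_dominators[OF Suc.prems(1)] in_dominators_self[OF Suc.prems(1)]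
      by simp
    ultimately have IH: "(idom E s ^^ n) (idom E s v) = s" "dom_depth E s (idom E s v) = n"
      using Suc.IH by auto
    then have "(idom E s ^^ Suc n) v = s" by (simp add: funpow_swap1)
    with IH \<open>v \<noteq> s\<close> show ?case
      unfolding dom_depth_def by (subst Least_Suc[where n = "Suc n"]) (auto simp: funpow_swap1)
  qed
  with assms card_dominators_pos show ?thesis by (metis Suc_diff_1)
qed

lemma dom_depth_strict_mono:
  assumes "dominates E s u v" and "u \<noteq> v"
  shows "dom_depth E s u < dom_depth E s v"
  using card_dominators_strict_mono[OF assms] card_dominators_pos[of E s u] assms(1)
  by (simp add: dom_depth_eq_card_dominators dominates_def)

lemma idom_changed_path:
  assumes "E' \<subseteq> E" and rv': "reachable E' s v" and "v \<noteq> s"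
    and changed: "idom E' s v \<noteq> idom E s v"
  defines "d \<equiv> idom E s v"
  obtains p q where "path_from_to E (p @ d # q) s v" and "d \<notin> set q" and "\<not> is_path E' (d # q)"
proof -
  define u where "u = idom E' s v"
  have rv: "reachable E s v" using reachable_mono[OF assms(1) rv'] .
  have dv: "dominates E s d v" using idom_spec(2)[OF rv \<open>v \<noteq> s\<close>] by (simp add: d_def)
  have dv': "dominates E' s d v" using dominates_subgraph[OF assms(1) dv rv'] .
  have uv': "dominates E' s u v" using idom_spec(2)[OF rv' \<open>v \<noteq> s\<close>] by (simp add: u_def)
  have du': "dominates E' s d u"
    using idom_spec(3)[OF rv' \<open>v \<noteq> s\<close>] idom_spec(1)[OF rv \<open>v \<noteq> s\<close>] dv' by (simp add: d_def u_def)
  have ud': "\<not> dominates E' s u d"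
  proof
    assume "dominates E' s u d"
    with du' have "d = u" by (rule dominates_antisym)
    with changed show False by (simp add: u_def d_def)
  qed
  have "\<not> dominates E s u v"
  proof
    assume "dominates E s u v"
    then have "dominates E s u d"
      using idom_spec(3)[OF rv \<open>v \<noteq> s\<close>] idom_spec(1)[OF rv' \<open>v \<noteq> s\<close>] by (simp add: d_def u_def)
    with ud' show False using dominates_subgraph[OF assms(1)] dv' by (auto simp: dominates_def)
  qed
  moreover have "reachable E s u" using reachable_mono[OF assms(1)] uv' by (simp add: dominates_def)
  ultimately obtain r where r: "path_from_to E r s v" "u \<notin> set r"
    using not_dominates_avoiding_path rv by metis
  then have "d \<in> set r" using dv unfolding dominates_def by blast
  then obtain p q where pq: "r = p @ d # q" "d \<notin> set q" by (meson split_list_last)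
  have "\<not> is_path E' (d # q)"
  proof
    assume "is_path E' (d # q)"
    then have dq': "path_from_to E' (d # q) d v"
      using path_from_to_split(2) r(1) pq(1) by (simp add: path_from_to_def)
    obtain t where t: "path_from_to E' t s d" "u \<notin> set t"
      using not_dominates_avoiding_path[OF ud'] dv' uv' by (metis dominates_def)
    have "path_from_to E' (t @ q) s v" using path_from_to_append[OF t(1) dq'] .
    with t(2) r(2) pq(1) uv' show False unfolding dominates_def by auto
  qed
  with r pq that show ?thesis by blast
qed

text \<open>Only the fact that \<open>(x, y)\<close> is the deleted edge is used.\<close>
theorem lemma5:
  fixes V :: "'a set" and E :: "('a \<times> 'a) set" and s x y v :: 'a
  assumes "flow_graph V E s"
    and "(x, y) \<in> E"
    and "reachable E s x"
    and "\<not> reachable (E - {(x, y)}) s y"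
    and "reachable E s v"
    and "reachable (E - {(x, y)}) s v"
    and "v \<noteq> s"
    and "idom (E - {(x, y)}) s v \<noteq> idom E s v"
  shows "\<exists>P. path_from_to E P y v \<and>
           (\<forall>w \<in> set P. dom_depth E s (idom E s v) < dom_depth E s w)"
proof -
  define d where "d = idom E s v"
  obtain p q where path: "path_from_to E (p @ d # q) s v" and "d \<notin> set q"
    and leaves: "\<not> is_path (E - {(x, y)}) (d # q)"
    using idom_changed_path[of "E - {(x, y)}" E s v] assms(6-8) d_def by blast
  have "is_path E (d # q)" using path_from_to_split(2)[OF path] by (simp add: path_from_to_def)
  then obtain as a b bs where "d # q = as @ a # b # bs" and "(a, b) = (x, y)"
    using successively_split_not_successively leaves unfolding is_path_def by fastforce
  then obtain cs where q: "q = cs @ y # bs" by (cases as) auto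
  have "path_from_to E (y # bs) y v" using path_from_to_split(2)[of E "p @ d # cs"] path q by simp
  moreover have "dom_depth E s d < dom_depth E s w" if "w \<in> set (y # bs)" for w
    using dom_depth_strict_mono dominates_after_last_occurrence[OF _ path \<open>d \<notin> set q\<close>]
      idom_spec(2)[OF assms(5,7)] that q \<open>d \<notin> set q\<close> d_def by fastforce
  ultimately show ?thesis using d_def by blast
qed

end
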